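(* Let $t\ge 2$. Let $G$ be a stitched 2-ichromatic ordered graph with vertices $v_1<\dots<v_{m+n}$ whose parts are $\{v_1,\ldots,v_m\}$ and $\{v_{m+1},\ldots,v_{m+n}\}$. If $v_1v_{m+n}$ and $v_mv_{m+1}$ are edges of $G$, then $R_t(G)\ge (2t+1)r+1$, where $r=\min(m,n)-1$.
   Context: An ordered graph is a graph together with a specified linear ordering of its vertex set. An ordered graph $G$ is contained in an ordered graph $H$ if there is an order-preserving injection $V(G)\to V(H)$ mapping edges to edges. An interval coloring of an ordered graph is a partition of its vertex set into independent sets each consisting of consecutive vertices (called parts); an ordered graph is 2-ichromatic if its minimum number of parts in an interval coloring is 2. A 2-ichromatic ordered graph is stitched if the four vertices consisting of the first and last vertex of each of the two parts lie in a single connected component. $R_t(G)$ is the minimum $N$ such that every coloring of the edges of the ordered complete graph on $N$ vertices with $t$ colors contains a monochromatic copy of $G$. *)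

theory Defs
  imports Main
begin

text \<open>An ordered graph on N vertices: vertex set {0..<N} with the natural order
  (vertex v_i of the paper is the number i-1), edge relation E.\<close>

definition ordered_graph :: "nat \<Rightarrow> (nat \<Rightarrow> nat \<Rightarrow> bool) \<Rightarrow> bool" where
  "ordered_graph N E \<longleftrightarrow> (\<forall>i j. E i j \<longrightarrow> i < N \<and> j < N \<and> i \<noteq> j \<and> E j i)"

definition independent :: "(nat \<Rightarrow> nat \<Rightarrow> bool) \<Rightarrow> nat set \<Rightarrow> bool" where
  "independent E S \<longleftrightarrow> (\<forall>i\<in>S. \<forall>j\<in>S. \<not> E i j)"

definition interval_coloring :: "nat \<Rightarrow> (nat \<Rightarrow> nat \<Rightarrow> bool) \<Rightarrow> nat \<Rightarrow> (nat \<Rightarrow> nat) \<Rightarrow> bool" where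
  "interval_coloring N E k b \<longleftrightarrow> b 0 = 0 \<and> b k = N \<and> (\<forall>i<k. b i < b (Suc i))
     \<and> (\<forall>i<k. independent E {b i..<b (Suc i)})"

definition ichromatic_number :: "nat \<Rightarrow> (nat \<Rightarrow> nat \<Rightarrow> bool) \<Rightarrow> nat" where
  "ichromatic_number N E = (LEAST k. \<exists>b. interval_coloring N E k b)"

definition connected_in :: "(nat \<Rightarrow> nat \<Rightarrow> bool) \<Rightarrow> nat \<Rightarrow> nat \<Rightarrow> bool" where
  "connected_in E x y \<longleftrightarrow> E\<^sup>*\<^sup>* x y"

text \<open>t-edge-coloring of the ordered complete graph on {0..<N}: the color of edge {i,j}
  with i<j is c i j, and it lies in {0..<t}.\<close>

definition edge_coloring :: "nat \<Rightarrow> nat \<Rightarrow> (nat \<Rightarrow> nat \<Rightarrow> nat) \<Rightarrow> bool" where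
  "edge_coloring N t c \<longleftrightarrow> (\<forall>i j. i < j \<and> j < N \<longrightarrow> c i j < t)"

definition mono_copy :: "nat \<Rightarrow> (nat \<Rightarrow> nat \<Rightarrow> nat) \<Rightarrow> nat \<Rightarrow> (nat \<Rightarrow> nat \<Rightarrow> bool) \<Rightarrow> bool" where
  "mono_copy N c M E \<longleftrightarrow> (\<exists>f col. strict_mono_on {0..<M} f \<and> f ` {0..<M} \<subseteq> {0..<N}
      \<and> (\<forall>i j. i < j \<and> j < M \<and> E i j \<longrightarrow> c (f i) (f j) = col))"

definition arrows :: "nat \<Rightarrow> nat \<Rightarrow> nat \<Rightarrow> (nat \<Rightarrow> nat \<Rightarrow> bool) \<Rightarrow> bool" where
  "arrows N t M E \<longleftrightarrow> (\<forall>c. edge_coloring N t c \<longrightarrow> mono_copy N c M E)"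

definition ordered_ramsey :: "nat \<Rightarrow> nat \<Rightarrow> (nat \<Rightarrow> nat \<Rightarrow> bool) \<Rightarrow> nat" where
  "ordered_ramsey t M E = (LEAST N. arrows N t M E)"

end

theory Submission
  imports Defs "HOL-Library.Ramsey"
begin

text \<open>Split the vertices below (2t+1)r into 2t+1 blocks of r consecutive vertices, numbered
  0, \<dots>, 2t, and colour an edge by the distance L of the blocks of its ends: colour 0 if L = 2t,
  or if L \<le> 1 and both blocks are inner (neither 0 nor 2t); otherwise colour min (t-1) (max 1 (L div 2)).
  A copy of G must place v_1, v_m, v_(m+1), v_(m+n) in blocks A < B \<le> C < D, since each part
  has more than r vertices. If the copy has colour 0, the edge v_1 v_(m+n) forces A = 0 and D = 2t;
  colour-0 edges never join an outer block to an inner one, so the component of v_1, which contains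
  v_m, stays in the outer blocks, contradicting 0 < B < 2t. Otherwise the long edge v_1 v_(m+n) has
  colour (D-A) div 2, while the nested edge v_m v_(m+1) gets colour 0 or a strictly smaller one.\<close>

lemma ex_arrows:
  assumes "t \<ge> 1"
  shows "\<exists>N. arrows N t M E"
proof -
  obtain N :: nat where N: "partn_lst {..<N} (replicate t M) 2"
    using ramsey_full[of "replicate t M" 2] by blast
  have "mono_copy N c M E" if c: "edge_coloring N t c" for c
  proof -
    define g where "g S = c (Min S) (Max S)" for S :: "nat set"
    have "g \<in> nsets {..<N} 2 \<rightarrow> {..<t}"
    proof
      fix S assume "S \<in> nsets {..<N} 2"
      then obtain x y where "S = {x, y}" "x \<noteq> y" "x < N" "y < N"
        by (auto simp: nsets_def card_2_iff)
      then show "g S \<in> {..<t}"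
        using c by (cases "x < y") (auto simp: g_def edge_coloring_def)
    qed
    then obtain col H where H: "H \<in> nsets {..<N} M" and gH: "g ` nsets H 2 \<subseteq> {col}"
      using N unfolding partn_lst_def monochromatic_def by fastforce
    define xs where "xs = sorted_list_of_set H"
    have xs: "sorted_wrt (<) xs" "set xs = H" "length xs = M" "H \<subseteq> {..<N}"
      using H by (auto simp: xs_def nsets_def)
    have mono: "c (xs ! i) (xs ! j) = col" if "i < j" "j < M" for i j
    proof -
      have less: "xs ! i < xs ! j"
        using xs that by (auto simp: sorted_wrt_iff_nth_less)
      then have "{xs ! i, xs ! j} \<in> nsets H 2"
        using that xs by (auto simp: nsets_def)
      then have "g {xs ! i, xs ! j} = col"
        using gH by blast
      with less show ?thesis
        by (simp add: g_def)
    qed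
    have "strict_mono_on {0..<M} ((!) xs)"
      using xs by (auto simp: strict_mono_on_def sorted_wrt_iff_nth_less)
    moreover have "(!) xs ` {0..<M} \<subseteq> {0..<N}"
    proof (rule image_subsetI)
      fix i assume "i \<in> {0..<M}"
      then have "xs ! i \<in> H"
        using xs(2,3) nth_mem by fastforce
      then show "xs ! i \<in> {0..<N}"
        using xs(4) by auto
    qed
    ultimately show ?thesis
      unfolding mono_copy_def using mono by (intro exI[of _ "(!) xs"] exI[of _ col]) simp
  qed
  then show ?thesis
    unfolding arrows_def by blast
qed

lemma ordered_ramsey_gt:
  assumes "t \<ge> 1" and "\<And>N. N \<le> K \<Longrightarrow> \<not> arrows N t M E"
  shows "K < ordered_ramsey t M E"
proof -
  have "arrows (ordered_ramsey t M E) t M E"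
    using ex_arrows[OF assms(1)] unfolding ordered_ramsey_def by (auto intro: LeastI_ex)
  then show ?thesis
    using assms(2) not_less by blast
qed

lemma strict_mono_on_add_diff_le:
  fixes f :: "nat \<Rightarrow> nat"
  assumes f: "strict_mono_on {0..<M} f" and "i \<le> j" "j < M"
  shows "f i + (j - i) \<le> f j"
  using assms(2,3)
proof (induction j rule: dec_induct)
  case base
  then show ?case by simp
next
  case (step k)
  then have "f k < f (Suc k)"
    by (intro strict_mono_onD[OF f]) auto
  with step show ?case by simp
qed

lemma connected_in_invariant:
  assumes "\<And>x y. E x y \<Longrightarrow> P x \<longleftrightarrow> P y" and "connected_in E x y"
  shows "P x \<longleftrightarrow> P y"
  using assms(2) unfolding connected_in_def
  by (induction rule: rtranclp_induct) (use assms(1) in auto)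

definition block_color :: "nat \<Rightarrow> nat \<Rightarrow> nat \<Rightarrow> nat" where
  "block_color t i j =
     (if j - i = 2 * t \<or> (j - i \<le> 1 \<and> 0 < i \<and> j < 2 * t) then 0
      else min (t - 1) (max 1 ((j - i) div 2)))"

definition blow_up_coloring :: "nat \<Rightarrow> nat \<Rightarrow> nat \<Rightarrow> nat \<Rightarrow> nat" where
  "blow_up_coloring t r x y = block_color t (x div r) (y div r)"

lemma block_color_less: "t \<ge> 2 \<Longrightarrow> block_color t i j < t"
  unfolding block_color_def by auto

lemma edge_coloring_blow_up: "t \<ge> 2 \<Longrightarrow> edge_coloring N t (blow_up_coloring t r)"
  unfolding edge_coloring_def blow_up_coloring_def by (simp add: block_color_less)

lemma block_color_eq_0_iff:
  assumes "t \<ge> 2"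
  shows "block_color t i j = 0 \<longleftrightarrow> j - i = 2 * t \<or> (j - i \<le> 1 \<and> 0 < i \<and> j < 2 * t)"
  using assms unfolding block_color_def by auto

lemma block_color_0_outer_iff:
  assumes "t \<ge> 2" "i \<le> j" "j \<le> 2 * t" "block_color t i j = 0"
  shows "i \<in> {0, 2 * t} \<longleftrightarrow> j \<in> {0, 2 * t}"
  using assms by (auto simp: block_color_eq_0_iff)

lemma block_color_0_long:
  assumes "t \<ge> 2" "i + 2 \<le> j" "j \<le> 2 * t" "block_color t i j = 0"
  shows "i = 0 \<and> j = 2 * t"
  using assms by (auto simp: block_color_eq_0_iff)

text \<open>Positive colours grow with the block distance, and short inner edges have colour 0.\<close>

lemma block_color_nested_neq:
  assumes t: "t \<ge> 2" and "i < i'" "i' \<le> j'" "j' < j" "j \<le> 2 * t"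
    and pos: "block_color t i j \<noteq> 0"
  shows "block_color t i' j' \<noteq> block_color t i j"
proof -
  have "j - i \<noteq> 2 * t"
    using pos by (auto simp: block_color_def)
  then have outer: "block_color t i j = (j - i) div 2"
    using assms unfolding block_color_def by (auto simp: min_def max_def, linarith+)
  show ?thesis
  proof (cases "j' - i' \<le> 1")
    case True
    then have "block_color t i' j' = 0"
      using assms by (simp add: block_color_eq_0_iff)
    then show ?thesis using pos by simp
  next
    case False
    then have "block_color t i' j' \<le> (j' - i') div 2"
      unfolding block_color_def by auto
    also have "\<dots> < (j - i) div 2"
      using assms by linarith
    finally show ?thesis
      using outer by simp
  qed
qed

text \<open>Here \<phi> v is the block containing the image of vertex v under a monochromatic copy.\<close>

lemma no_monochromatic_block_copy:
  fixes \<phi> :: "nat \<Rightarrow> nat"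
  assumes t: "t \<ge> 2" and "m \<ge> 1" and "n \<ge> 1"
    and og: "ordered_graph (m + n) E" and conn: "connected_in E 0 (m - 1)"
    and e1: "E 0 (m + n - 1)" and e2: "E (m - 1) m"
    and mono: "\<And>u v. u < v \<Longrightarrow> v < m + n \<Longrightarrow> \<phi> u \<le> \<phi> v"
    and bound: "\<And>v. v < m + n \<Longrightarrow> \<phi> v \<le> 2 * t"
    and first: "\<phi> 0 < \<phi> (m - 1)" and second: "\<phi> m < \<phi> (m + n - 1)"
    and mc: "\<And>u v. u < v \<Longrightarrow> v < m + n \<Longrightarrow> E u v \<Longrightarrow> block_color t (\<phi> u) (\<phi> v) = col"
  shows False
proof -
  have last: "m + n - 1 < m + n" and "m - 1 < m" "m < m + n" "0 < m + n - 1"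
    using \<open>m \<ge> 1\<close> \<open>n \<ge> 1\<close> by simp_all
  then have middle: "\<phi> (m - 1) \<le> \<phi> m"
    and long: "block_color t (\<phi> 0) (\<phi> (m + n - 1)) = col"
    and short: "block_color t (\<phi> (m - 1)) (\<phi> m) = col"
    using mono mc e1 e2 by blast+
  show False
  proof (cases "col = 0")
    case True
    have "\<phi> 0 + 2 \<le> \<phi> (m + n - 1)"
      using first middle second by linarith
    from block_color_0_long[OF t this bound[OF last]] long True
    have ends: "\<phi> 0 = 0" "\<phi> (m + n - 1) = 2 * t"
      by simp_all
    have outer_step: "\<phi> u \<in> {0, 2 * t} \<longleftrightarrow> \<phi> v \<in> {0, 2 * t}"
      if "u < v" "v < m + n" "E u v" for u v
    proof (rule block_color_0_outer_iff[OF t mono[OF that(1,2)] bound[OF that(2)]])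
      show "block_color t (\<phi> u) (\<phi> v) = 0"
        using mc[OF that] True by simp
    qed
    have "\<phi> x \<in> {0, 2 * t} \<longleftrightarrow> \<phi> y \<in> {0, 2 * t}" if "E x y" for x y
    proof -
      have "x < m + n" "y < m + n" "x \<noteq> y" "E y x"
        using og that unfolding ordered_graph_def by blast+
      then consider "x < y" | "y < x"
        by linarith
      then show ?thesis
      proof cases
        case 1
        show ?thesis using outer_step[OF 1 \<open>y < m + n\<close> that] .
      next
        case 2
        show ?thesis using outer_step[OF 2 \<open>x < m + n\<close> \<open>E y x\<close>] by (rule sym)
      qed
    qed
    from connected_in_invariant[where P = "\<lambda>v. \<phi> v \<in> {0, 2 * t}", OF this conn] ends
    have "\<phi> (m - 1) \<in> {0, 2 * t}"
      by simp
    with ends first middle second show False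
      by auto
  next
    case False
    then show False
      using block_color_nested_neq[OF t first middle second bound[OF last]] long short by simp
  qed
qed

lemma not_arrows_blow_up:
  assumes t: "t \<ge> 2" and m: "m \<ge> r + 1" and n: "n \<ge> r + 1" and N: "N \<le> (2 * t + 1) * r"
    and og: "ordered_graph (m + n) E" and conn: "connected_in E 0 (m - 1)"
    and e1: "E 0 (m + n - 1)" and e2: "E (m - 1) m"
  shows "\<not> mono_copy N (blow_up_coloring t r) (m + n) E"
proof
  assume "mono_copy N (blow_up_coloring t r) (m + n) E"
  then obtain f col where f: "strict_mono_on {0..<m + n} f" and img: "f ` {0..<m + n} \<subseteq> {0..<N}"
    and mc: "\<forall>u v. u < v \<and> v < m + n \<and> E u v \<longrightarrow> blow_up_coloring t r (f u) (f v) = col"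
    unfolding mono_copy_def by (elim exE conjE)
  have fN: "f v < (2 * t + 1) * r" if "v < m + n" for v
  proof -
    have "f v \<in> {0..<N}"
      using img that by (simp add: image_subset_iff)
    with N show ?thesis by simp
  qed
  have "r > 0"
    using fN[of 0] m by (cases r) simp_all
  have bound: "f v div r \<le> 2 * t" if "v < m + n" for v
  proof -
    have "f v div r < 2 * t + 1"
      using fN[OF that] \<open>r > 0\<close> by (simp only: div_less_iff_less_mult)
    then show ?thesis by simp
  qed
  have mono: "f u div r \<le> f v div r" if "u < v" "v < m + n" for u v
    using strict_mono_onD[OF f] that by (simp add: div_le_mono less_imp_le)
  have far: "f u div r < f v div r" if "u + r \<le> v" "v < m + n" for u v
  proof -
    have "f u + r \<le> f v"
      using strict_mono_on_add_diff_le[OF f, of u v] that by simp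
    then have "(f u + r) div r \<le> f v div r"
      by (rule div_le_mono)
    then show ?thesis
      using \<open>r > 0\<close> by simp
  qed
  show False
  proof (rule no_monochromatic_block_copy[of t m n E "\<lambda>v. f v div r" col, OF t _ _ og conn e1 e2])
    show "1 \<le> m" "1 \<le> n"
      using m n by simp_all
    show "f u div r \<le> f v div r" if "u < v" "v < m + n" for u v
      using mono[OF that] .
    show "f v div r \<le> 2 * t" if "v < m + n" for v
      using bound[OF that] .
    show "f 0 div r < f (m - 1) div r" "f m div r < f (m + n - 1) div r"
      using far m n by simp_all
    show "block_color t (f u div r) (f v div r) = col" if "u < v" "v < m + n" "E u v" for u v
      using mc that unfolding blow_up_coloring_def by blast
  qed
qed

theorem corollary5p1:
  fixes t m n :: nat and E :: "nat \<Rightarrow> nat \<Rightarrow> bool"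
  assumes "t \<ge> 2" and "m \<ge> 1" and "n \<ge> 1"
    and "ordered_graph (m + n) E"
    and "ichromatic_number (m + n) E = 2"
    and "interval_coloring (m + n) E 2 (\<lambda>i. if i = 0 then 0 else if i = 1 then m else m + n)"
    and "\<forall>x\<in>{0, m - 1, m, m + n - 1}. \<forall>y\<in>{0, m - 1, m, m + n - 1}. connected_in E x y"
    and "E 0 (m + n - 1)" and "E (m - 1) m"
  shows "ordered_ramsey t (m + n) E \<ge> (2 * t + 1) * (min m n - 1) + 1"
proof -
  define r where "r = min m n - 1"
  have "m \<ge> r + 1" "n \<ge> r + 1"
    using assms(2,3) unfolding r_def by auto
  moreover have "connected_in E 0 (m - 1)"
    using assms(7) by simp
  ultimately have "\<not> arrows N t (m + n) E" if "N \<le> (2 * t + 1) * r" for N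
    using not_arrows_blow_up[OF assms(1) _ _ that assms(4) _ assms(8,9)]
      edge_coloring_blow_up[OF assms(1)] unfolding arrows_def by blast
  then have "(2 * t + 1) * r < ordered_ramsey t (m + n) E"
    using ordered_ramsey_gt assms(1) by simp
  then show ?thesis
    unfolding r_def by simp
qed

end
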